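(* For every $d\ge 0$, the face poset $C^d$ of the $d$-dimensional hypercube satisfies $$\mathcal{M}_{C^d}(z)=(3-2z)^d-z(2-z)^d+1.$$
   Context: The face poset of a convex polytope with vertex set $V$ is the set of vertex sets of its faces (including the whole polytope) together with $\emptyset$, ordered by inclusion, ranked by dimension ($|\emptyset|=-1$). The Möbius function $\mu$ is $\mu[p,p]=1$, $\mu[p,q]=-\sum_{p\le s<q}\mu[p,s]$ for $p<q$, $0$ if $p\not\le q$; the Möbius polynomial is $\mathcal{M}_P(z)=\sum_{p\le q\in P}\mu[p,q]z^{|q|-|p|}$. *)

theory Defs
  imports "HOL-Computational_Algebra.Polynomial"
begin

text \<open>Moebius function of a poset P of sets ordered by inclusion:
  mu[p,p] = 1, mu[p,q] = - sum over p <= s < q (s in P) of mu[p,s] for p < q, and 0 otherwise.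
  (All sets occurring here are finite; the finiteness guard only serves termination.)\<close>
function mobius :: "'a set set \<Rightarrow> 'a set \<Rightarrow> 'a set \<Rightarrow> int" where
  "mobius P p q =
     (if p = q then 1
      else if p \<subset> q \<and> finite q then
        - (\<Sum>s\<in>{s\<in>P. p \<subseteq> s \<and> s \<subset> q}. mobius P p s)
      else 0)"
  by auto
termination
  by (relation "measure (\<lambda>(P,p,q). card q)") (auto intro: psubset_card_mono)

definition mobius_poly :: "'a set set \<Rightarrow> ('a set \<Rightarrow> int) \<Rightarrow> int poly" where
  "mobius_poly P rk =
     (\<Sum>(p,q)\<in>{(p,q). p \<in> P \<and> q \<in> P \<and> p \<subseteq> q}. monom (mobius P p q) (nat (rk q - rk p)))"

text \<open>The d-cube [0,1]^d: vertices are the 0/1-vectors of length d (as bool lists).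
  Its (nonempty) faces are given by fixing some coordinates (Some b) and leaving
  the others free (None); the face's vertex set is below.\<close>
definition cube_vertices :: "nat \<Rightarrow> bool list set" where
  "cube_vertices d = {v. length v = d}"

definition cube_face_vset :: "bool option list \<Rightarrow> bool list set" where
  "cube_face_vset s = {v. length v = length s \<and> (\<forall>i<length s. s ! i = None \<or> s ! i = Some (v ! i))}"

definition cube_face_poset :: "nat \<Rightarrow> bool list set set" where
  "cube_face_poset d = insert {} {cube_face_vset s | s. length s = d}"

definition cube_rank :: "bool list set \<Rightarrow> int" where
  "cube_rank F = (if F = {} then -1 else int (THE k. card F = 2 ^ k))"

end

theory Submission
  imports Defs
begin

(* The face poset of the cube is Eulerian: every interval [p, q] with p < q contains equally many
   elements of even and of odd rank. By induction along the recursion defining the Moebius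
   function this forces mu[p, q] = (-1)^(rk q - rk p), so the Moebius polynomial is the generating
   function of the intervals by length, evaluated at -z.

   A nonempty face is a vector in {0, 1, *}^d, and inclusion of faces is coordinatewise refinement,
   so every sum over an interval factors over the coordinates. Below a face with k free coordinates
   the sum of x^(dim s) y^(k - dim s) is (x + 2y)^k, and an interval [a, t] of nonempty faces
   contributes (1 + x)^(dim t - dim a); with x = -1 both give the Eulerian property. Summing
   x^(rk q - rk p) over all pairs p <= q gives 1 + x (x + 2)^d + (2x + 3)^d, and x = -z gives
   the formula. *)

declare mobius.simps [simp del]

definition eulerian :: "'a set set \<Rightarrow> ('a set \<Rightarrow> int) \<Rightarrow> bool" where
  "eulerian P rk \<longleftrightarrow>
     (\<forall>p\<in>P. \<forall>q\<in>P. p \<subset> q \<longrightarrow>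
        (\<Sum>s\<in>{s\<in>P. p \<subseteq> s \<and> s \<subseteq> q}. (-1::int) ^ nat (rk s - rk p)) = 0)"

lemma mobius_eulerian:
  assumes "finite P" "eulerian P rk" "p \<in> P" "q \<in> P" "p \<subseteq> q" "finite q"
  shows "mobius P p q = (-1) ^ nat (rk q - rk p)"
  using \<open>finite q\<close> \<open>q \<in> P\<close> \<open>p \<subseteq> q\<close>
proof (induction q rule: finite_psubset_induct)
  case (psubset q)
  show ?case
  proof (cases "p = q")
    case True
    then show ?thesis
      by (simp add: mobius.simps)
  next
    case False
    let ?below = "{s\<in>P. p \<subseteq> s \<and> s \<subset> q}"
    have "(\<Sum>s\<in>{s\<in>P. p \<subseteq> s \<and> s \<subseteq> q}. (-1::int) ^ nat (rk s - rk p)) = 0"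
      using assms(2,3) psubset.prems False unfolding eulerian_def by blast
    moreover have "{s\<in>P. p \<subseteq> s \<and> s \<subseteq> q} = insert q ?below"
      using psubset.prems by auto
    ultimately have euler:
      "(-1) ^ nat (rk q - rk p) + (\<Sum>s\<in>?below. (-1::int) ^ nat (rk s - rk p)) = 0"
      using assms(1) by (simp add: sum.insert)
    have "mobius P p q = - (\<Sum>s\<in>?below. mobius P p s)"
      using False psubset by (subst mobius.simps) auto
    also have "\<dots> = - (\<Sum>s\<in>?below. (-1) ^ nat (rk s - rk p))"
      using psubset.IH by (auto intro!: sum.cong)
    finally show ?thesis
      using euler by linarith
  qed
qed

lemma monom_minus_one_power: "monom ((-1::'a::comm_ring_1) ^ n) n = (- [:0, 1:]) ^ n"
  by (simp add: monom_altdef flip: smult_power)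

lemma mobius_poly_eulerian:
  assumes "finite P" "\<And>q. q \<in> P \<Longrightarrow> finite q" "eulerian P rk"
  shows "mobius_poly P rk =
           (\<Sum>q\<in>P. \<Sum>p\<in>{p\<in>P. p \<subseteq> q}. (- [:0, 1:]) ^ nat (rk q - rk p))"
proof -
  have "mobius_poly P rk =
          (\<Sum>(p, q)\<in>{(p, q). p \<in> P \<and> q \<in> P \<and> p \<subseteq> q}. (- [:0, 1:]) ^ nat (rk q - rk p))"
    unfolding mobius_poly_def
  proof (rule sum.cong [OF refl], clarify)
    fix p q
    assume "p \<in> P" "q \<in> P" "p \<subseteq> q"
    with assms show "monom (mobius P p q) (nat (rk q - rk p)) = (- [:0, 1:]) ^ nat (rk q - rk p)"
      by (simp add: mobius_eulerian monom_minus_one_power)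
  qed
  also have "\<dots> = (\<Sum>(q, p)\<in>(SIGMA q:P. {p\<in>P. p \<subseteq> q}). (- [:0, 1:]) ^ nat (rk q - rk p))"
    by (rule sum.reindex_bij_witness [of _ prod.swap prod.swap]) auto
  also have "\<dots> = (\<Sum>q\<in>P. \<Sum>p\<in>{p\<in>P. p \<subseteq> q}. (- [:0, 1:]) ^ nat (rk q - rk p))"
    using assms(1) by (simp add: sum.Sigma)
  finally show ?thesis .
qed

lemma sum_list_all2_prod_list:
  fixes R :: "'a::finite \<Rightarrow> 'b \<Rightarrow> bool" and w :: "'a \<Rightarrow> 'b \<Rightarrow> 'c::comm_semiring_1"
  shows "(\<Sum>s | list_all2 R s t. prod_list (map2 w s t)) = (\<Prod>c\<leftarrow>t. \<Sum>e | R e c. w e c)"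
proof (induction t)
  case Nil
  have "{s. list_all2 R s []} = {[]}"
    by auto
  then show ?case
    by simp
next
  case (Cons c t)
  have split:
    "{s. list_all2 R s (c # t)} = (\<lambda>(e, s). e # s) ` ({e. R e c} \<times> {s. list_all2 R s t})"
    by (auto simp: list_all2_Cons2)
  have "(\<Sum>s | list_all2 R s (c # t). prod_list (map2 w s (c # t)))
      = (\<Sum>(e, s)\<in>{e. R e c} \<times> {s. list_all2 R s t}. w e c * prod_list (map2 w s t))"
    unfolding split by (subst sum.reindex) (auto simp: inj_on_def intro!: sum.cong)
  also have "\<dots> = (\<Sum>e | R e c. w e c) * (\<Sum>s | list_all2 R s t. prod_list (map2 w s t))"
    by (simp add: sum_product sum.cartesian_product)
  finally show ?case
    using Cons by simp
qed

lemma UNIV_bool_option: "(UNIV :: bool option set) = {None, Some True, Some False}"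
  using UNIV_option_conv UNIV_bool by auto

lemma prod_list_if_None: "(\<Prod>c\<leftarrow>t. if c = None then z else 1) = z ^ count_list t None"
  by (induction t) auto

lemma count_list_replicate_None: "count_list (replicate d None) None = d"
  by (induction d) auto

definition subface :: "bool option list \<Rightarrow> bool option list \<Rightarrow> bool" where
  "subface s t \<longleftrightarrow> list_all2 (\<lambda>e c. c = None \<or> c = e) s t"

lemma subface_length: "subface s t \<Longrightarrow> length s = length t"
  by (simp add: subface_def list_all2_lengthD)

lemma subface_count_None_le: "subface s t \<Longrightarrow> count_list s None \<le> count_list t None"
  unfolding subface_def by (induction rule: list_all2_induct) auto

lemma subface_count_None_less:
  "subface s t \<Longrightarrow> s \<noteq> t \<Longrightarrow> count_list s None < count_list t None"
  unfolding subface_def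
proof (induction rule: list_all2_induct)
  case (Cons e s c t)
  show ?case
  proof (cases "s = t")
    case True
    with Cons have "c = None" "e \<noteq> None"
      by auto
    with True show ?thesis
      by simp
  next
    case False
    with Cons have "count_list s None < count_list t None"
      by blast
    with Cons.hyps(1) show ?thesis
      by auto
  qed
qed simp

lemma subface_antisym: "subface s t \<Longrightarrow> subface t s \<Longrightarrow> s = t"
  using subface_count_None_less subface_count_None_le by fastforce

lemma finite_sign_vectors: "finite {s :: bool option list. length s = d}"
  using finite_lists_length_eq [OF finite_UNIV, of d] by simp

lemma finite_subfaces: "finite {s. subface s t}"
  by (rule finite_subset [OF _ finite_sign_vectors [of "length t"]]) (auto dest: subface_length)

lemma sum_subface_pow:
  fixes x y :: "'a::comm_semiring_1"
  shows "(\<Sum>s | subface s t. x ^ count_list s None * y ^ (count_list t None - count_list s None))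
       = (x + 2 * y) ^ count_list t None"
proof -
  define w where "w e c = (if e = None then x else if c = None then y else 1)" for e c :: "bool option"
  have weight:
    "prod_list (map2 w s t) = x ^ count_list s None * y ^ (count_list t None - count_list s None)"
    if "subface s t" for s
    using that unfolding subface_def
    by (induction rule: list_all2_induct)
      (auto simp: w_def Suc_diff_le subface_count_None_le [unfolded subface_def] mult_ac)
  have coordinate: "(\<Sum>e | c = None \<or> c = e. w e c) = (if c = None then x + 2 * y else 1)" for c
    by (cases c) (auto simp: w_def UNIV_bool_option mult_2 add.assoc)
  have "(\<Sum>s | subface s t. x ^ count_list s None * y ^ (count_list t None - count_list s None))
      = (\<Sum>s | list_all2 (\<lambda>e c. c = None \<or> c = e) s t. prod_list (map2 w s t))"
    by (rule sum.cong) (auto simp: weight subface_def)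
  also have "\<dots> = (x + 2 * y) ^ count_list t None"
    by (simp add: sum_list_all2_prod_list coordinate prod_list_if_None)
  finally show ?thesis .
qed

lemma sum_sign_vectors_pow:
  fixes x :: "'a::comm_semiring_1"
  shows "(\<Sum>t :: bool option list | length t = d. x ^ count_list t None) = (x + 2) ^ d"
proof -
  have "{t. length t = d} = {t. subface t (replicate d None)}"
    by (auto simp: subface_def list_all2_conv_all_nth)
  moreover have "(\<Sum>t | subface t (replicate d None). x ^ count_list t None) = (x + 2) ^ d"
    using sum_subface_pow [of x 1 "replicate d None"] by (simp add: count_list_replicate_None)
  ultimately show ?thesis
    by simp
qed

lemma prod_list_subface_codim:
  "subface s t \<Longrightarrow>
     (\<Prod>(e, c)\<leftarrow>zip s t. if e \<noteq> None \<and> c = None then z else 1)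
       = z ^ (count_list t None - count_list s None)"
  unfolding subface_def
  by (induction rule: list_all2_induct)
    (auto simp: Suc_diff_le subface_count_None_le [unfolded subface_def])

lemma sum_subface_interval_pow:
  fixes x :: "'a::comm_semiring_1"
  assumes "subface a t"
  shows "(\<Sum>u | subface a u \<and> subface u t. x ^ (count_list u None - count_list a None))
       = (1 + x) ^ (count_list t None - count_list a None)"
proof -
  (* the interval is a product of coordinate intervals, indexed by the pairs (a ! i, t ! i) *)
  define R :: "bool option \<Rightarrow> bool option \<times> bool option \<Rightarrow> bool"
    where "R e = (\<lambda>(c, c'). (e = None \<or> e = c) \<and> (c' = None \<or> c' = e))" for e
  define w :: "bool option \<Rightarrow> bool option \<times> bool option \<Rightarrow> 'a"
    where "w e = (\<lambda>(c, c'). if c \<noteq> None \<and> e = None then x else 1)" for e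
  have lengths: "length a = length t"
    using assms by (rule subface_length)
  have interval: "list_all2 R u (zip a t) \<longleftrightarrow> subface a u \<and> subface u t" for u
  proof (cases "length u = length a")
    case True
    then show ?thesis
      using lengths by (induction u a t rule: list_induct3) (auto simp: R_def subface_def)
  next
    case False
    with lengths show ?thesis
      by (auto dest: subface_length list_all2_lengthD)
  qed
  have weight: "prod_list (map2 w u (zip a t)) = x ^ (count_list u None - count_list a None)"
    if "subface a u" "subface u t" for u
    using subface_length [OF that(1)] subface_length [OF that(2)] that
    by (induction a u t rule: list_induct3)
      (auto simp: subface_def w_def Suc_diff_le subface_count_None_le [unfolded subface_def] mult_ac)
  have coordinate:
    "(\<Sum>e | R e (c, c'). w e (c, c')) = (if c \<noteq> None \<and> c' = None then 1 + x else 1)"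
    if "c' = None \<or> c' = c" for c c'
  proof -
    have "{e. R e (c, c')} = (if c' = None then insert None {c} else {c})"
      using that by (auto simp: R_def)
    then show ?thesis
      using that by (auto simp: w_def add.commute)
  qed
  have coordinates: "(\<Prod>ct\<leftarrow>zip a t. \<Sum>e | R e ct. w e ct)
      = (\<Prod>(c, c')\<leftarrow>zip a t. if c \<noteq> None \<and> c' = None then 1 + x else 1)"
    using assms
    by (intro arg_cong [where f = prod_list] map_cong)
      (auto simp: subface_def list_all2_iff coordinate)
  have "(\<Sum>u | subface a u \<and> subface u t. x ^ (count_list u None - count_list a None))
      = (\<Sum>u | list_all2 R u (zip a t). prod_list (map2 w u (zip a t)))"
    by (rule sum.cong) (auto simp: interval weight)
  also have "\<dots> = (1 + x) ^ (count_list t None - count_list a None)"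
    by (simp only: sum_list_all2_prod_list coordinates prod_list_subface_codim [OF assms])
  finally show ?thesis .
qed

lemma cube_face_vset_Nil: "cube_face_vset [] = {[]}"
  by (auto simp: cube_face_vset_def)

lemma cube_face_vset_Cons:
  "cube_face_vset (e # s) =
     (\<lambda>(b, v). b # v) ` ({b. e = None \<or> e = Some b} \<times> cube_face_vset s)"
proof (intro set_eqI iffI)
  fix v
  assume "v \<in> cube_face_vset (e # s)"
  then show "v \<in> (\<lambda>(b, v). b # v) ` ({b. e = None \<or> e = Some b} \<times> cube_face_vset s)"
    by (cases v) (auto simp: cube_face_vset_def All_less_Suc2)
qed (auto simp: cube_face_vset_def All_less_Suc2)

lemma coordinate_values_nonempty: "{b. e = None \<or> e = Some b} \<noteq> {}"
  by (cases e) auto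

lemma cube_face_vset_nonempty: "cube_face_vset s \<noteq> {}"
  by (induction s) (auto simp: cube_face_vset_Nil cube_face_vset_Cons coordinate_values_nonempty)

lemma empty_notin_image_cube_face_vset: "{} \<notin> cube_face_vset ` A"
  using cube_face_vset_nonempty by force

lemma finite_cube_face_vset: "finite (cube_face_vset s)"
  by (induction s) (auto simp: cube_face_vset_Nil cube_face_vset_Cons)

lemma card_cube_face_vset: "card (cube_face_vset s) = 2 ^ count_list s None"
proof (induction s)
  case (Cons e s)
  have "card {b. e = None \<or> e = Some b} = (if e = None then 2 else 1)"
    by (cases e) (auto simp: UNIV_bool)
  then show ?case
    using Cons by (simp add: cube_face_vset_Cons card_image inj_on_def card_cartesian_product)
qed (simp add: cube_face_vset_Nil)

lemma cube_face_vset_subset_iff: "cube_face_vset s \<subseteq> cube_face_vset t \<longleftrightarrow> subface s t"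
proof (induction s t rule: list_induct2')
  case 1
  then show ?case
    by (simp add: subface_def)
next
  case (2 e s)
  then show ?case
    using cube_face_vset_nonempty [of "e # s"]
    by (auto simp: cube_face_vset_Nil cube_face_vset_def subface_def)
next
  case (3 c t)
  then show ?case
    by (simp add: cube_face_vset_Nil cube_face_vset_def subface_def)
next
  case (4 e s c t)
  have inj_Cons: "inj (\<lambda>(b, v :: bool list). b # v)"
    by (auto simp: inj_def)
  have "{b. e = None \<or> e = Some b} \<subseteq> {b. c = None \<or> c = Some b} \<longleftrightarrow> c = None \<or> c = e"
    by (cases e; cases c) auto
  with 4 show ?case
    by (auto simp: cube_face_vset_Cons inj_image_subset_iff [OF inj_Cons] times_subset_iff
        coordinate_values_nonempty cube_face_vset_nonempty subface_def)
qed

lemma inj_on_cube_face_vset: "inj_on cube_face_vset A"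
  by (auto intro!: inj_onI subface_antisym simp flip: cube_face_vset_subset_iff)

lemma cube_rank_cube_face_vset: "cube_rank (cube_face_vset s) = int (count_list s None)"
proof -
  have "(THE k. card (cube_face_vset s) = 2 ^ k) = count_list s None"
    unfolding card_cube_face_vset by (rule the_equality) (auto simp: power_inject_exp)
  then show ?thesis
    using cube_face_vset_nonempty by (simp add: cube_rank_def)
qed

lemma cube_rank_empty: "cube_rank {} = -1"
  by (simp add: cube_rank_def)

lemma cube_face_poset_eq: "cube_face_poset d = insert {} (cube_face_vset ` {s. length s = d})"
  by (auto simp: cube_face_poset_def)

lemma finite_cube_face_poset: "finite (cube_face_poset d)"
  by (simp add: cube_face_poset_eq finite_sign_vectors)

lemma finite_cube_face: "F \<in> cube_face_poset d \<Longrightarrow> finite F"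
  by (auto simp: cube_face_poset_eq finite_cube_face_vset)

lemma cube_faces_below:
  assumes "length t = d"
  shows "{p\<in>cube_face_poset d. p \<subseteq> cube_face_vset t} =
           insert {} (cube_face_vset ` {s. subface s t})"
  using assms subface_length cube_face_vset_subset_iff by (fastforce simp: cube_face_poset_eq)

lemma cube_faces_between:
  assumes "length t = d"
  shows "{s\<in>cube_face_poset d. cube_face_vset a \<subseteq> s \<and> s \<subseteq> cube_face_vset t} =
           cube_face_vset ` {u. subface a u \<and> subface u t}"
proof -
  have "{s\<in>cube_face_poset d. cube_face_vset a \<subseteq> s \<and> s \<subseteq> cube_face_vset t} =
          {s\<in>insert {} (cube_face_vset ` {u. subface u t}). cube_face_vset a \<subseteq> s}"
    using cube_faces_below [OF assms] by blast
  also have "\<dots> = cube_face_vset ` {u. subface a u \<and> subface u t}"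
    using cube_face_vset_nonempty [of a] by (auto simp flip: cube_face_vset_subset_iff)
  finally show ?thesis .
qed

lemma eulerian_cube_face_poset: "eulerian (cube_face_poset d) cube_rank"
  unfolding eulerian_def
proof (intro ballI impI)
  fix p q
  assume p: "p \<in> cube_face_poset d" and "q \<in> cube_face_poset d" and "p \<subset> q"
  then obtain t where t: "q = cube_face_vset t" "length t = d"
    by (auto simp: cube_face_poset_eq)
  show "(\<Sum>s\<in>{s\<in>cube_face_poset d. p \<subseteq> s \<and> s \<subseteq> q}.
          (-1::int) ^ nat (cube_rank s - cube_rank p)) = 0"
  proof (cases "p = {}")
    case True
    have "(\<Sum>s\<in>{s\<in>cube_face_poset d. p \<subseteq> s \<and> s \<subseteq> q}.
            (-1::int) ^ nat (cube_rank s - cube_rank p))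
        = 1 + (\<Sum>s | subface s t. (-1) ^ Suc (count_list s None))"
      using True t
      by (simp add: cube_faces_below finite_subfaces empty_notin_image_cube_face_vset sum.reindex
          inj_on_cube_face_vset cube_rank_cube_face_vset cube_rank_empty nat_add_distrib)
    also have "\<dots> = 0"
      using sum_subface_pow [of "-1::int" 1 t] by (simp add: sum_negf)
    finally show ?thesis .
  next
    case False
    then obtain a where a: "p = cube_face_vset a"
      using p by (auto simp: cube_face_poset_eq)
    with \<open>p \<subset> q\<close> t have "subface a t" "a \<noteq> t"
      by (auto simp: cube_face_vset_subset_iff)
    have "(\<Sum>s\<in>{s\<in>cube_face_poset d. p \<subseteq> s \<and> s \<subseteq> q}.
            (-1::int) ^ nat (cube_rank s - cube_rank p))
        = (\<Sum>u | subface a u \<and> subface u t. (-1) ^ (count_list u None - count_list a None))"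
      using a t
      by (simp add: cube_faces_between sum.reindex inj_on_cube_face_vset cube_rank_cube_face_vset
          nat_minus_as_int)
    also have "\<dots> = 0"
      using sum_subface_interval_pow [OF \<open>subface a t\<close>, of "-1::int"]
        subface_count_None_less [OF \<open>subface a t\<close> \<open>a \<noteq> t\<close>]
      by simp
    finally show ?thesis .
  qed
qed

lemma sum_pow_rank_diff_below_cube_face:
  fixes x :: "'a::comm_semiring_1"
  assumes "length t = d"
  shows "(\<Sum>p\<in>{p\<in>cube_face_poset d. p \<subseteq> cube_face_vset t}.
            x ^ nat (cube_rank (cube_face_vset t) - cube_rank p))
       = x * x ^ count_list t None + (1 + 2 * x) ^ count_list t None"
proof -
  have "(\<Sum>p\<in>{p\<in>cube_face_poset d. p \<subseteq> cube_face_vset t}.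
            x ^ nat (cube_rank (cube_face_vset t) - cube_rank p))
      = x ^ Suc (count_list t None) +
        (\<Sum>s | subface s t. x ^ nat (int (count_list t None) - int (count_list s None)))"
    using assms
    by (simp add: cube_faces_below finite_subfaces empty_notin_image_cube_face_vset sum.reindex
        inj_on_cube_face_vset cube_rank_cube_face_vset cube_rank_empty nat_add_distrib)
  also have "\<dots> = x * x ^ count_list t None +
      (\<Sum>s | subface s t. 1 ^ count_list s None * x ^ (count_list t None - count_list s None))"
    by (simp add: nat_minus_as_int)
  also have "\<dots> = x * x ^ count_list t None + (1 + 2 * x) ^ count_list t None"
    by (simp only: sum_subface_pow)
  finally show ?thesis .
qed

lemma sum_pow_rank_diff_cube_face_poset:
  fixes x :: "'a::comm_semiring_1"
  shows "(\<Sum>q\<in>cube_face_poset d. \<Sum>p\<in>{p\<in>cube_face_poset d. p \<subseteq> q}.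
            x ^ nat (cube_rank q - cube_rank p))
       = 1 + x * (x + 2) ^ d + (2 * x + 3) ^ d"
proof -
  have sum_faces:
    "(\<Sum>q\<in>cube_face_poset d. g q) = g {} + (\<Sum>t | length t = d. g (cube_face_vset t))"
    for g :: "bool list set \<Rightarrow> 'a"
    by (simp add: cube_face_poset_eq finite_sign_vectors empty_notin_image_cube_face_vset
        sum.reindex inj_on_cube_face_vset)
  have below_empty: "{p\<in>cube_face_poset d. p \<subseteq> {}} = {{}}"
    by (auto simp: cube_face_poset_eq)
  have "(\<Sum>q\<in>cube_face_poset d. \<Sum>p\<in>{p\<in>cube_face_poset d. p \<subseteq> q}.
            x ^ nat (cube_rank q - cube_rank p))
      = 1 + (\<Sum>t :: bool option list | length t = d.
               x * x ^ count_list t None + (1 + 2 * x) ^ count_list t None)"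
    unfolding sum_faces below_empty by (simp add: sum_pow_rank_diff_below_cube_face)
  also have "\<dots> = 1 + x * (x + 2) ^ d + (1 + 2 * x + 2) ^ d"
    by (simp add: sum.distrib sum_sign_vectors_pow flip: sum_distrib_left) (simp add: add.assoc)
  also have "1 + 2 * x + 2 = 2 * x + (3::'a)"
  proof -
    have "(1::'a) + 2 = 3"
      by simp
    then show ?thesis
      by (metis add.commute add.left_commute)
  qed
  finally show ?thesis .
qed

theorem mainTheorem9:
  fixes d :: nat
  shows "mobius_poly (cube_face_poset d) cube_rank =
           [:3, -2:] ^ d - [:0, 1:] * [:2, -1:] ^ d + 1"
proof -
  have "mobius_poly (cube_face_poset d) cube_rank
      = (\<Sum>q\<in>cube_face_poset d. \<Sum>p\<in>{p\<in>cube_face_poset d. p \<subseteq> q}.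
           (- [:0, 1:]) ^ nat (cube_rank q - cube_rank p))"
    by (rule mobius_poly_eulerian)
      (auto simp: finite_cube_face_poset finite_cube_face eulerian_cube_face_poset)
  also have "\<dots> = 1 + (- [:0, 1:]) * (- [:0, 1:] + 2) ^ d + (2 * (- [:0, 1:]) + 3) ^ d"
    by (rule sum_pow_rank_diff_cube_face_poset)
  also have "\<dots> = [:3, -2:] ^ d - [:0, 1:] * [:2, -1:] ^ d + 1"
  proof -
    have "- [:0, 1:] + 2 = [:2, -1::int:]" "2 * (- [:0, 1:]) + 3 = [:3, -2::int:]"
      by (simp_all add: numeral_poly)
    then show ?thesis
      by simp
  qed
  finally show ?thesis .
qed

end
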